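(* Let $n\geq1$, $d\geq 2$, and let $F\in\mathcal{P}_{n,d+1}$ with $F(0)=0$, written as $F=\sum_{c=1}^{d+1}F_c$ with $F_c=((F_c)_1,\dots,(F_c)_n)$ homogeneous of degree $c$. Define $\tilde F:\mathbb{C}^n\times\mathbb{C}^{n\times n}\to\mathbb{C}^n\times\mathbb{C}^{n\times n}$, with variables $z^{(1)}=(z^{(1)}_i)_{1\le i\le n}$ and $z^{(2)}=(z^{(2)}_{ij})_{1\le i,j\le n}$, by $$\tilde F^{(1)}_i(z^{(1)},z^{(2)})=\sum_{j=1}^n z^{(2)}_{ij}z^{(1)}_j,\qquad \tilde F^{(2)}_{ij}(z^{(1)},z^{(2)})=z^{(2)}_{ij}-\sum_{c=1}^{d+1}\frac1c\,\frac{\partial (F_c)_i}{\partial z^{(1)}_j}(z^{(1)}).$$ Then $\tilde F\in\mathcal{P}_{n(n+1),d}$; the map $R(z^{(2)};z^{(1)}):=\tilde F^{(2)}(z^{(1)},z^{(2)})$ is, for each $z^{(1)}$, an invertible translation in $z^{(2)}$ with inverse $R^{-1}(y^{(2)};z^{(1)})_{ij}=y^{(2)}_{ij}+\sum_c\frac1c\frac{\partial (F_c)_i}{\partial z^{(1)}_j}(z^{(1)})$; and $$\tilde F^{(1)}\big(z^{(1)},R^{-1}(0;z^{(1)})\big)=F(z^{(1)})\quad\text{for all }z^{(1)}\in\mathbb{C}^n.$$ Consequently $F\in\mathcal{J}^{\rm lin}_{n}$ if and only if $\tilde F\in\mathcal{J}^{\rm lin}_{n(n+1),d;n}$, and $F\in\mathcal{J}_{n}$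 if and only if $\tilde F\in\mathcal{J}_{n(n+1),d;n}$.
   Context: $\mathcal{P}_{m,d}$ is the set of polynomial maps $\mathbb{C}^m\to\mathbb{C}^m$ of total degree $\le d$; $J_F(z)=(\partial F_j/\partial z_i)_{i,j}$. $\mathcal{J}^{\rm lin}_n$: polynomial maps $\mathbb{C}^n\to\mathbb{C}^n$ with $\det J_F$ a nonzero constant; $\mathcal{J}_n$: polynomial maps $\mathbb{C}^n\to\mathbb{C}^n$ that are bijective with polynomial inverse. For $0\le n'\le m$, split $z=(z_1,z_2)\in\mathbb{C}^{n'}\times\mathbb{C}^{m-n'}$, $F=(F_1,F_2)$, $R(z_2;z_1):=F_2(z_1,z_2)$, and when $R(\cdot;z_1)$ is invertible write $R^{-1}(\cdot;z_1)$ for its inverse. $\mathcal{J}^{\rm lin}_{m,d;n'}$ is the set of $F\in\mathcal{P}_{m,d}$ with $R(\cdot;z_1)\in\mathcal{J}_{m-n'}$ for all $z_1$ and $\det J_F(z_1,R^{-1}(0;z_1))=c\in\mathbb{C}^\times$ constant in $z_1$. $\mathcal{J}_{m,d;n'}$ is the set of $F\in\mathcal{P}_{m,d}$ with $R(\cdot;z_1)\in\mathcal{J}_{m-n'}$ for all $z_1$ and such that $F$ restricted to $F^{-1}(\mathbb{C}^{n'}\times\{0\})$ is a bijection onto $\mathbb{C}^{n'}\times\{0\}$ whose inverse $y_1\mapsto F^{-1}(y_1,0)$ is a polynomial map. Here $m=n(n+1)$ and $n'=n$, the first block being $z^{(1)}$ and the second $z^{(2)}$ (identified with $\mathbb{C}^{n^2}$).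 *)

theory Defs
  imports "HOL-Analysis.Analysis"
begin

text \<open>Points of C^m are functions 'a => complex for a finite index type 'a with
  CARD('a) = m.  The space C^{n'} x C^{m-n'} is indexed by the sum type 'a + 'b.\<close>

definition poly_fun :: "nat \<Rightarrow> (('a::finite \<Rightarrow> complex) \<Rightarrow> complex) \<Rightarrow> bool" where
  "poly_fun d p \<longleftrightarrow> (\<exists>coef :: ('a \<Rightarrow> nat) \<Rightarrow> complex. \<forall>z.
      p z = (\<Sum>\<alpha>\<in>{\<alpha>. sum \<alpha> UNIV \<le> d}. coef \<alpha> * (\<Prod>i\<in>UNIV. z i ^ \<alpha> i)))"

definition hom_poly :: "nat \<Rightarrow> (('a::finite \<Rightarrow> complex) \<Rightarrow> complex) \<Rightarrow> bool" where
  "hom_poly c p \<longleftrightarrow> (\<exists>coef :: ('a \<Rightarrow> nat) \<Rightarrow> complex. \<forall>z.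
      p z = (\<Sum>\<alpha>\<in>{\<alpha>. sum \<alpha> UNIV = c}. coef \<alpha> * (\<Prod>i\<in>UNIV. z i ^ \<alpha> i)))"

definition poly_map :: "nat \<Rightarrow> (('a::finite \<Rightarrow> complex) \<Rightarrow> ('c \<Rightarrow> complex)) \<Rightarrow> bool" where
  "poly_map d G \<longleftrightarrow> (\<forall>j. poly_fun d (\<lambda>z. G z j))"

definition polynomial_map :: "(('a::finite \<Rightarrow> complex) \<Rightarrow> ('c \<Rightarrow> complex)) \<Rightarrow> bool" where
  "polynomial_map G \<longleftrightarrow> (\<exists>d. poly_map d G)"

definition partial :: "(('a \<Rightarrow> complex) \<Rightarrow> complex) \<Rightarrow> 'a \<Rightarrow> ('a \<Rightarrow> complex) \<Rightarrow> complex" where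
  "partial f i z = deriv (\<lambda>t. f (z(i := t))) (z i)"

definition jac :: "(('a::finite \<Rightarrow> complex) \<Rightarrow> ('a \<Rightarrow> complex)) \<Rightarrow> ('a \<Rightarrow> complex) \<Rightarrow> complex^'a^'a" where
  "jac F z = (\<chi> i j. partial (\<lambda>w. F w j) i z)"

definition jac_det :: "(('a::finite \<Rightarrow> complex) \<Rightarrow> ('a \<Rightarrow> complex)) \<Rightarrow> ('a \<Rightarrow> complex) \<Rightarrow> complex" where
  "jac_det F z = det (jac F z)"

definition isJlin :: "(('a::finite \<Rightarrow> complex) \<Rightarrow> ('a \<Rightarrow> complex)) \<Rightarrow> bool" where
  "isJlin F \<longleftrightarrow> polynomial_map F \<and> (\<exists>c. c \<noteq> 0 \<and> (\<forall>z. jac_det F z = c))"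

definition isJ :: "(('a::finite \<Rightarrow> complex) \<Rightarrow> ('a \<Rightarrow> complex)) \<Rightarrow> bool" where
  "isJ F \<longleftrightarrow> polynomial_map F \<and> bij F \<and> polynomial_map (inv F)"

definition blk_R :: "((('a + 'b) \<Rightarrow> complex) \<Rightarrow> (('a + 'b) \<Rightarrow> complex))
    \<Rightarrow> ('a \<Rightarrow> complex) \<Rightarrow> ('b \<Rightarrow> complex) \<Rightarrow> ('b \<Rightarrow> complex)" where
  "blk_R F z1 z2 = (\<lambda>b. F (case_sum z1 z2) (Inr b))"

definition isJlin_blk :: "nat \<Rightarrow> ((('a::finite + 'b::finite) \<Rightarrow> complex) \<Rightarrow> (('a + 'b) \<Rightarrow> complex)) \<Rightarrow> bool" where
  "isJlin_blk d F \<longleftrightarrow> poly_map d F \<and> (\<forall>z1. isJ (blk_R F z1)) \<and>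
     (\<exists>c. c \<noteq> 0 \<and> (\<forall>z1. jac_det F (case_sum z1 (inv (blk_R F z1) (\<lambda>_. 0))) = c))"

definition isJ_blk :: "nat \<Rightarrow> ((('a::finite + 'b::finite) \<Rightarrow> complex) \<Rightarrow> (('a + 'b) \<Rightarrow> complex)) \<Rightarrow> bool" where
  "isJ_blk d F \<longleftrightarrow> poly_map d F \<and> (\<forall>z1. isJ (blk_R F z1)) \<and>
     (let S = {y. \<forall>b. y (Inr b) = 0} in
       bij_betw F (F -` S) S \<and>
       (\<exists>G :: ('a \<Rightarrow> complex) \<Rightarrow> (('a + 'b) \<Rightarrow> complex). polynomial_map G \<and>
          (\<forall>y1. F (G y1) = case_sum y1 (\<lambda>_. 0))))"

definition Ftilde :: "nat \<Rightarrow> (nat \<Rightarrow> ('n::finite \<Rightarrow> complex) \<Rightarrow> ('n \<Rightarrow> complex))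
    \<Rightarrow> (('n + 'n \<times> 'n) \<Rightarrow> complex) \<Rightarrow> (('n + 'n \<times> 'n) \<Rightarrow> complex)" where
  "Ftilde d Fc z = (\<lambda>k. case k of
      Inl i \<Rightarrow> (\<Sum>j\<in>UNIV. z (Inr (i, j)) * z (Inl j))
    | Inr (i, j) \<Rightarrow> z (Inr (i, j)) - (\<Sum>c\<in>{1..d+1}. (1 / of_nat c) *
          partial (\<lambda>x. Fc c x i) j (\<lambda>l. z (Inl l))))"

definition Rinv :: "nat \<Rightarrow> (nat \<Rightarrow> ('n::finite \<Rightarrow> complex) \<Rightarrow> ('n \<Rightarrow> complex))
    \<Rightarrow> ('n \<Rightarrow> complex) \<Rightarrow> ('n \<times> 'n \<Rightarrow> complex) \<Rightarrow> ('n \<times> 'n \<Rightarrow> complex)" where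
  "Rinv d Fc z1 y2 = (\<lambda>(i, j). y2 (i, j) + (\<Sum>c\<in>{1..d+1}. (1 / of_nat c) *
          partial (\<lambda>x. Fc c x i) j z1))"

end

theory Submission
  imports Defs
begin

text \<open>Write \<open>Q(z)\<close> for the matrix \<open>Q_ij = \<Sum>_c (1/c) \<partial>(F_c)_i/\<partial>z_j\<close>.  The second block
  of F-tilde is the translation \<open>z^(2) \<mapsto> z^(2) - Q(z^(1))\<close>, so its zero set is the graph of
  the polynomial section \<open>lift(z^(1)) = (z^(1), Q(z^(1)))\<close>, and Euler's identity
  \<open>\<Sum>_j z_j \<partial>_j F_c = c F_c\<close> gives \<open>F-tilde(lift(z^(1))) = (Q(z^(1)) z^(1), 0) = (F(z^(1)), 0)\<close>.
  Bijectivity and polynomial inverses therefore transfer between F and F-tilde restricted to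
  that graph.  At \<open>lift(z^(1))\<close> the Jacobian of F-tilde has an identity block, so its determinant
  is that of the Schur complement, which differentiating \<open>F_i = \<Sum>_q z_q Q_iq\<close> identifies
  with the Jacobian matrix of F.\<close>

lemma mult_if_one_zero:
  "(x::'a::semiring_1) * (if P then 1 else 0) = (if P then x else 0)"
  "(if P then 1 else 0) * x = (if P then x else 0)"
  by simp_all

lemma sum_prod_delta_fst:
  fixes f :: "'a::finite \<times> 'b::finite \<Rightarrow> 'c::semiring_0"
  shows "(\<Sum>y\<in>UNIV. f y * (if fst y = i then g (snd y) else 0)) = (\<Sum>q\<in>UNIV. f (i, q) * g q)"
proof -
  have "(\<Sum>y\<in>UNIV. f y * (if fst y = i then g (snd y) else 0))
      = (\<Sum>p\<in>UNIV. \<Sum>q\<in>UNIV. f (p, q) * (if p = i then g q else 0))"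
    by (subst UNIV_Times_UNIV[symmetric], subst sum.cartesian_product') (simp cong: if_cong)
  also have "\<dots> = (\<Sum>p\<in>UNIV. if p = i then (\<Sum>q\<in>UNIV. f (p, q) * g q) else 0)"
    by (intro sum.cong) auto
  finally show ?thesis by simp
qed

section \<open>Determinants of block matrices\<close>

lemmas sum_UNIV_Plus = sum.Plus[OF finite_class.finite_UNIV finite_class.finite_UNIV, unfolded UNIV_Plus_UNIV]
lemmas prod_UNIV_Plus = prod.Plus[OF finite_class.finite_UNIV finite_class.finite_UNIV, unfolded UNIV_Plus_UNIV]

lemma map_sum_permutes:
  assumes "q permutes (UNIV :: 'a set)"
  shows "map_sum q (id :: 'b \<Rightarrow> 'b) permutes UNIV"
proof (rule bij_imp_permutes)
  have "bij q" using assms by (rule permutes_bij)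
  then show "bij (map_sum q (id :: 'b \<Rightarrow> 'b))"
    by (intro o_bij[of "map_sum (inv q) id"])
       (simp_all add: map_sum.comp bij_is_inj bij_is_surj[unfolded surj_iff] sum.map_id0)
qed simp

lemma sign_map_sum:
  fixes q :: "'a::finite \<Rightarrow> 'a"
  assumes "q permutes UNIV"
  shows "sign (map_sum q (id :: 'b::finite \<Rightarrow> 'b)) = sign q"
  using assms finite[of "UNIV :: 'a set"]
proof (induction rule: permutes_induct)
  case id
  then show ?case by (simp only: sum.map_id0 sign_id)
next
  case (swap a b p)
  have "permutation p" "permutation (map_sum p (id :: 'b \<Rightarrow> 'b))"
    using swap.hyps(4) map_sum_permutes[OF swap.hyps(4)] by (auto simp: permutation_permutes)
  moreover have "map_sum (Transposition.transpose a b \<circ> p) (id :: 'b \<Rightarrow> 'b)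
      = Transposition.transpose (Inl a) (Inl b) \<circ> map_sum p id"
    by (auto simp: fun_eq_iff split_sum_all Transposition.transpose_def)
  ultimately show ?case
    using swap.IH by (simp only: sign_compose permutation_swap_id) (simp add: sign_swap_id)
qed

lemma permutes_fixing_Inr_eq:
  "{p. p permutes (UNIV :: ('a::finite + 'b) set) \<and> (\<forall>b. p (Inr b) = Inr b)}
     = (\<lambda>q. map_sum q id) ` {q. q permutes (UNIV :: 'a set)}"
proof (intro equalityI subsetI)
  fix p :: "'a + 'b \<Rightarrow> 'a + 'b"
  assume "p \<in> {p. p permutes UNIV \<and> (\<forall>b. p (Inr b) = Inr b)}"
  then have "inj p" and fix_Inr: "\<And>b. p (Inr b) = Inr b"
    by (auto dest: permutes_inj)
  have "\<exists>c. p (Inl a) = Inl c" for a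
    using \<open>inj p\<close> fix_Inr by (cases "p (Inl a)") (simp, metis injD sum.distinct(1))
  then obtain q where q: "\<And>a. p (Inl a) = Inl (q a)" by metis
  have "inj q" using \<open>inj p\<close> by (metis injD injI q sum.inject(1))
  then have "q permutes UNIV"
    by (intro bij_imp_permutes) (auto simp: bij_def finite_UNIV_inj_surj)
  moreover have "p = map_sum q id" by (simp add: fun_eq_iff split_sum_all q fix_Inr)
  ultimately show "p \<in> (\<lambda>q. map_sum q id) ` {q. q permutes UNIV}" by blast
qed (auto intro: map_sum_permutes)

lemma det_block_lower_identity:
  fixes M :: "'a::comm_ring_1^('n::finite + 'm::finite)^('n + 'm)"
  assumes lower: "\<And>b k. M $ Inr b $ k = (if k = Inr b then 1 else 0)"
  shows "det M = det (\<chi> a a'. M $ Inl a $ Inl a')"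
proof -
  let ?t = "\<lambda>p. of_int (sign p) * (\<Prod>k\<in>UNIV. M $ k $ p k)"
  let ?Q = "{p. p permutes (UNIV :: ('n + 'm) set) \<and> (\<forall>b. p (Inr b) = Inr b)}"
  have "det M = sum ?t {p. p permutes UNIV}" unfolding det_def ..
  also have "\<dots> = sum ?t ?Q"
  proof (rule sum.mono_neutral_right)
    show "\<forall>p\<in>{p. p permutes UNIV} - ?Q. ?t p = 0"
    proof
      fix p assume "p \<in> {p. p permutes UNIV} - ?Q"
      then obtain b where "M $ Inr b $ p (Inr b) = 0" by (auto simp: lower)
      then have "(\<Prod>k\<in>UNIV. M $ k $ p k) = 0" by (intro prod_zero) auto
      then show "?t p = 0" by simp
    qed
  qed auto
  also have "\<dots> = sum (?t \<circ> (\<lambda>q. map_sum q id)) {q. q permutes UNIV}"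
    unfolding permutes_fixing_Inr_eq
    by (intro sum.reindex inj_onI ext) (metis map_sum.simps(1) sum.inject(1))
  also have "\<dots> = det (\<chi> a a'. M $ Inl a $ Inl a')"
    unfolding det_def by (intro sum.cong) (auto simp: sign_map_sum prod_UNIV_Plus lower o_def)
  finally show ?thesis .
qed

text \<open>Right multiplication by the unimodular matrix N clears the lower-left block and turns the
  upper-left block into the Schur complement.\<close>
lemma det_schur_complement:
  fixes M :: "'a::comm_ring_1^('n::finite + 'm::finite)^('n + 'm)"
  assumes lower_right: "\<And>x y. M $ Inr x $ Inr y = (if y = x then 1 else 0)"
  shows "det M = det (\<chi> a i. M $ Inl a $ Inl i - (\<Sum>y\<in>UNIV. M $ Inl a $ Inr y * M $ Inr y $ Inl i))"
proof -
  define N :: "'a^('n + 'm)^('n + 'm)" where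
    "N = (\<chi> k l. case k of Inl a \<Rightarrow> (if l = Inl a then 1 else 0)
                | Inr x \<Rightarrow> (case l of Inl i \<Rightarrow> - M $ Inr x $ Inl i | Inr y \<Rightarrow> (if y = x then 1 else 0)))"
  have N_Inl: "N $ Inl a $ l = (if l = Inl a then 1 else 0)" for a l unfolding N_def by simp
  have N_Inr: "N $ Inr x $ Inl i = - M $ Inr x $ Inl i" "N $ Inr x $ Inr y = (if y = x then 1 else 0)"
    for x y i unfolding N_def by simp_all
  have "det N = det (transpose N)" by simp
  also have "\<dots> = det (\<chi> a a'. transpose N $ Inl a $ Inl a')"
  proof (rule det_block_lower_identity)
    fix b k show "transpose N $ Inr b $ k = (if k = Inr b then 1 else 0)"
      by (cases k) (auto simp: transpose_def N_Inl N_Inr)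
  qed
  also have "(\<chi> a a'. transpose N $ Inl a $ Inl a') = mat 1"
    by (simp add: vec_eq_iff transpose_def mat_def N_Inl)
  finally have det_N: "det N = 1" by simp
  have MN: "(M ** N) $ k $ l = (\<Sum>a\<in>UNIV. M $ k $ Inl a * N $ Inl a $ l)
      + (\<Sum>y\<in>UNIV. M $ k $ Inr y * N $ Inr y $ l)" for k l
    unfolding matrix_matrix_mult_def by (simp add: sum_UNIV_Plus o_def)
  have "det M = det (M ** N)" by (simp add: det_mul det_N)
  also have "\<dots> = det (\<chi> a a'. (M ** N) $ Inl a $ Inl a')"
  proof (rule det_block_lower_identity)
    fix b k show "(M ** N) $ Inr b $ k = (if k = Inr b then 1 else 0)"
      by (cases k) (simp_all add: MN N_Inl N_Inr lower_right sum_negf mult_if_one_zero)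
  qed
  also have "(\<chi> a a'. (M ** N) $ Inl a $ Inl a')
      = (\<chi> a i. M $ Inl a $ Inl i - (\<Sum>y\<in>UNIV. M $ Inl a $ Inr y * M $ Inr y $ Inl i))"
    by (simp add: vec_eq_iff MN N_Inl N_Inr sum_negf mult_if_one_zero)
  finally show ?thesis .
qed

section \<open>Polynomial functions\<close>

definition monomial :: "('a::finite \<Rightarrow> nat) \<Rightarrow> ('a \<Rightarrow> complex) \<Rightarrow> complex" where
  "monomial \<alpha> z = (\<Prod>i\<in>UNIV. z i ^ \<alpha> i)"

lemma finite_total_degree_le: "finite {\<alpha>::'a::finite \<Rightarrow> nat. sum \<alpha> UNIV \<le> d}"
proof (rule finite_subset)
  show "{\<alpha>::'a \<Rightarrow> nat. sum \<alpha> UNIV \<le> d} \<subseteq> Pi\<^sub>E UNIV (\<lambda>_. {..d})"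
    unfolding PiE_UNIV_domain
  proof
    fix \<alpha> :: "'a \<Rightarrow> nat" assume "\<alpha> \<in> {\<alpha>. sum \<alpha> UNIV \<le> d}"
    then have "\<alpha> i \<le> d" for i using member_le_sum[of i UNIV \<alpha>] by simp
    then show "\<alpha> \<in> Pi UNIV (\<lambda>_. {..d})" by auto
  qed
qed (simp add: finite_PiE)

lemma poly_funE:
  assumes "poly_fun d p"
  obtains coef where "\<And>z. p z = (\<Sum>\<alpha>\<in>{\<alpha>. sum \<alpha> UNIV \<le> d}. coef \<alpha> * monomial \<alpha> z)"
  using assms unfolding poly_fun_def monomial_def by blast

lemma hom_polyE:
  assumes "hom_poly c p"
  obtains coef where "\<And>z. p z = (\<Sum>\<alpha>\<in>{\<alpha>. sum \<alpha> UNIV = c}. coef \<alpha> * monomial \<alpha> z)"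
  using assms unfolding hom_poly_def monomial_def by blast

text \<open>The exponents \<open>g k\<close> may repeat; equal ones are collected into a single coefficient.\<close>
lemma poly_funI:
  fixes g :: "'k \<Rightarrow> ('a::finite \<Rightarrow> nat)"
  assumes "finite K" and "\<And>k. k \<in> K \<Longrightarrow> sum (g k) UNIV \<le> d"
    and "\<And>z. p z = (\<Sum>k\<in>K. c k * monomial (g k) z)"
  shows "poly_fun d p"
  unfolding poly_fun_def
proof (intro exI allI)
  fix z
  let ?D = "{\<alpha>::'a \<Rightarrow> nat. sum \<alpha> UNIV \<le> d}"
  have "(\<Sum>\<alpha>\<in>?D. (\<Sum>k\<in>{k\<in>K. g k = \<alpha>}. c k) * (\<Prod>i\<in>UNIV. z i ^ \<alpha> i))
      = (\<Sum>\<alpha>\<in>?D. \<Sum>k\<in>{k\<in>K. g k = \<alpha>}. c k * monomial (g k) z)"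
    unfolding sum_distrib_right monomial_def by (intro sum.cong refl) auto
  also have "\<dots> = (\<Sum>k\<in>K. c k * monomial (g k) z)"
    by (rule sum.group[OF assms(1) finite_total_degree_le]) (use assms(2) in auto)
  finally show "p z = (\<Sum>\<alpha>\<in>?D. (\<Sum>k\<in>{k\<in>K. g k = \<alpha>}. c k) * (\<Prod>i\<in>UNIV. z i ^ \<alpha> i))"
    using assms(3) by simp
qed

lemma poly_fun_mono:
  assumes "d \<le> e" and "poly_fun d p"
  shows "poly_fun e p"
proof -
  obtain coef where "\<And>z. p z = (\<Sum>\<alpha>\<in>{\<alpha>. sum \<alpha> UNIV \<le> d}. coef \<alpha> * monomial \<alpha> z)"
    using poly_funE[OF assms(2)] by blast
  then show ?thesis
    using assms(1) by (intro poly_funI[OF finite_total_degree_le]) auto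
qed

lemma hom_poly_imp_poly_fun:
  assumes "hom_poly c p"
  shows "poly_fun c p"
proof -
  obtain coef where "\<And>z. p z = (\<Sum>\<alpha>\<in>{\<alpha>. sum \<alpha> UNIV = c}. coef \<alpha> * monomial \<alpha> z)"
    using hom_polyE[OF assms] by blast
  then show ?thesis
    by (intro poly_funI[where K="{\<alpha>. sum \<alpha> UNIV = c}"])
       (auto intro: finite_subset[OF _ finite_total_degree_le[of c]])
qed

lemma poly_fun_const: "poly_fun d (\<lambda>z. a)"
  by (rule poly_funI[where K="{()}" and g="\<lambda>_ _. 0" and c="\<lambda>_. a"]) (auto simp: monomial_def)

lemma poly_fun_var: "poly_fun 1 (\<lambda>z. z i)"
proof (rule poly_funI[where K="{()}" and g="\<lambda>_ j. if j = i then 1 else 0" and c="\<lambda>_. 1"])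
  show "z i = (\<Sum>k\<in>{()}. 1 * monomial (\<lambda>j. if j = i then 1 else 0) z)" for z
    by (simp add: monomial_def if_distrib[of "power _"] cong: if_cong)
qed auto

lemma poly_fun_add:
  assumes "poly_fun d p" and "poly_fun d q"
  shows "poly_fun d (\<lambda>z. p z + q z)"
proof -
  obtain a where p: "\<And>z. p z = (\<Sum>\<alpha>\<in>{\<alpha>. sum \<alpha> UNIV \<le> d}. a \<alpha> * monomial \<alpha> z)"
    using poly_funE[OF assms(1)] by blast
  obtain b where q: "\<And>z. q z = (\<Sum>\<alpha>\<in>{\<alpha>. sum \<alpha> UNIV \<le> d}. b \<alpha> * monomial \<alpha> z)"
    using poly_funE[OF assms(2)] by blast
  show ?thesis
    by (rule poly_funI[OF finite_total_degree_le, where c="\<lambda>\<alpha>. a \<alpha> + b \<alpha>" and g=id])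
       (auto simp: p q distrib_right sum.distrib)
qed

lemma monomial_add: "monomial (\<lambda>i. \<alpha> i + \<beta> i) z = monomial \<alpha> z * monomial \<beta> z"
  unfolding monomial_def by (simp add: power_add prod.distrib)

lemma poly_fun_mult:
  assumes "poly_fun d p" and "poly_fun e q"
  shows "poly_fun (d + e) (\<lambda>z. p z * q z)"
proof -
  obtain a where p: "\<And>z. p z = (\<Sum>\<alpha>\<in>{\<alpha>. sum \<alpha> UNIV \<le> d}. a \<alpha> * monomial \<alpha> z)"
    using poly_funE[OF assms(1)] by blast
  obtain b where q: "\<And>z. q z = (\<Sum>\<beta>\<in>{\<beta>. sum \<beta> UNIV \<le> e}. b \<beta> * monomial \<beta> z)"
    using poly_funE[OF assms(2)] by blast
  let ?K = "{\<alpha>::'a \<Rightarrow> nat. sum \<alpha> UNIV \<le> d} \<times> {\<beta>::'a \<Rightarrow> nat. sum \<beta> UNIV \<le> e}"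
  show ?thesis
  proof (rule poly_funI[where K="?K" and g="\<lambda>k i. fst k i + snd k i" and c="\<lambda>k. a (fst k) * b (snd k)"])
    show "finite ?K" by (intro finite_cartesian_product finite_total_degree_le)
    show "sum (\<lambda>i. fst k i + snd k i) UNIV \<le> d + e" if "k \<in> ?K" for k
      using that by (auto simp: sum.distrib)
    show "p z * q z = (\<Sum>k\<in>?K. a (fst k) * b (snd k) * monomial (\<lambda>i. fst k i + snd k i) z)" for z
      unfolding p q sum_product sum.cartesian_product monomial_add
      by (simp add: case_prod_beta mult_ac)
  qed
qed

lemma poly_fun_sum:
  assumes "finite I" and "\<And>i. i \<in> I \<Longrightarrow> poly_fun d (f i)"
  shows "poly_fun d (\<lambda>z. \<Sum>i\<in>I. f i z)"
  using assms by (induction I rule: finite_induct) (auto intro: poly_fun_const poly_fun_add)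

lemma poly_fun_prod:
  assumes "finite I" and "\<And>i. i \<in> I \<Longrightarrow> poly_fun (e i) (f i)"
  shows "poly_fun (sum e I) (\<lambda>z. \<Prod>i\<in>I. f i z)"
  using assms by (induction I rule: finite_induct) (auto intro: poly_fun_const poly_fun_mult)

lemma poly_fun_power:
  assumes "poly_fun d p"
  shows "poly_fun (n * d) (\<lambda>z. p z ^ n)"
  using poly_fun_prod[of "{..<n}" "\<lambda>_. d" "\<lambda>_. p"] assms by simp

lemma poly_fun_cmult:
  assumes "poly_fun d p"
  shows "poly_fun d (\<lambda>z. c * p z)"
  using poly_fun_mult[OF poly_fun_const assms, of 0 c] by simp

lemma poly_fun_diff:
  assumes "poly_fun d p" and "poly_fun d q"
  shows "poly_fun d (\<lambda>z. p z - q z)"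
  using poly_fun_add[OF assms(1) poly_fun_cmult[OF assms(2), of "-1"]] by simp

lemma poly_fun_compose:
  assumes "poly_fun d p" and "\<And>l. poly_fun e (q l)"
  shows "poly_fun (d * e) (\<lambda>z. p (\<lambda>l. q l z))"
proof -
  obtain coef where p: "\<And>z. p z = (\<Sum>\<alpha>\<in>{\<alpha>. sum \<alpha> UNIV \<le> d}. coef \<alpha> * monomial \<alpha> z)"
    using poly_funE[OF assms(1)] by blast
  have "poly_fun (d * e) (\<lambda>z. coef \<alpha> * monomial \<alpha> (\<lambda>l. q l z))" if "sum \<alpha> UNIV \<le> d" for \<alpha>
  proof -
    have "poly_fun (\<Sum>l\<in>UNIV. \<alpha> l * e) (\<lambda>z. \<Prod>l\<in>UNIV. q l z ^ \<alpha> l)"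
      by (intro poly_fun_prod poly_fun_power assms(2)) simp
    moreover have "(\<Sum>l\<in>UNIV. \<alpha> l * e) \<le> d * e"
      using that by (simp add: sum_distrib_right[symmetric])
    ultimately show ?thesis
      unfolding monomial_def by (intro poly_fun_cmult) (rule poly_fun_mono)
  qed
  then show ?thesis
    unfolding p by (intro poly_fun_sum finite_total_degree_le) auto
qed

lemma poly_map_compose:
  assumes "poly_map d P" and "poly_map e Q"
  shows "poly_map (d * e) (P \<circ> Q)"
  using assms unfolding poly_map_def by (auto intro: poly_fun_compose)

lemma polynomial_map_compose:
  assumes "polynomial_map P" and "polynomial_map Q"
  shows "polynomial_map (P \<circ> Q)"
  using assms poly_map_compose unfolding polynomial_map_def by blast

section \<open>Partial derivatives of polynomial functions\<close>

lemma monomial_upd: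
  "monomial \<alpha> (z(j := t)) = t ^ \<alpha> j * (\<Prod>i\<in>UNIV - {j}. z i ^ \<alpha> i)"
proof -
  have "monomial \<alpha> (z(j := t)) = t ^ \<alpha> j * (\<Prod>i\<in>UNIV - {j}. (z(j := t)) i ^ \<alpha> i)"
    unfolding monomial_def by (subst prod.remove[of _ j]) auto
  also have "(\<Prod>i\<in>UNIV - {j}. (z(j := t)) i ^ \<alpha> i) = (\<Prod>i\<in>UNIV - {j}. z i ^ \<alpha> i)"
    by (intro prod.cong) auto
  finally show ?thesis .
qed

lemma has_field_derivative_monomial:
  "((\<lambda>t. monomial \<alpha> (z(j := t))) has_field_derivative
      of_nat (\<alpha> j) * monomial (\<alpha>(j := \<alpha> j - 1)) (z(j := t))) (at t)"
  unfolding monomial_upd by (auto intro!: derivative_eq_intros)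

lemma has_field_derivative_fun_upd:
  "((\<lambda>t. (w(k := t)) l) has_field_derivative (if l = k then 1 else 0)) (at t)"
  by (cases "l = k") (auto intro!: derivative_eq_intros)

lemma partial_eqI:
  assumes "((\<lambda>t. f (z(j := t))) has_field_derivative v) (at (z j))"
  shows "partial f j z = v"
  unfolding partial_def using assms by (rule DERIV_imp_deriv)

lemma has_field_derivative_monomial_expansion:
  assumes "\<And>z. p z = (\<Sum>\<alpha>\<in>S. coef \<alpha> * monomial \<alpha> z)"
  shows "((\<lambda>t. p (z(j := t))) has_field_derivative
      (\<Sum>\<alpha>\<in>S. coef \<alpha> * (of_nat (\<alpha> j) * monomial (\<alpha>(j := \<alpha> j - 1)) (z(j := t))))) (at t)"
  unfolding assms by (intro DERIV_sum DERIV_cmult has_field_derivative_monomial)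

lemma partial_monomial_expansion:
  assumes "\<And>z. p z = (\<Sum>\<alpha>\<in>S. coef \<alpha> * monomial \<alpha> z)"
  shows "partial p j z = (\<Sum>\<alpha>\<in>S. coef \<alpha> * (of_nat (\<alpha> j) * monomial (\<alpha>(j := \<alpha> j - 1)) z))"
  using partial_eqI[OF has_field_derivative_monomial_expansion[OF assms, of z j "z j"]] by simp

lemma has_field_derivative_partial:
  assumes "poly_fun d p"
  shows "((\<lambda>t. p (z(j := t))) has_field_derivative partial p j (z(j := t))) (at t)"
proof -
  obtain coef where p: "\<And>z. p z = (\<Sum>\<alpha>\<in>{\<alpha>. sum \<alpha> UNIV \<le> d}. coef \<alpha> * monomial \<alpha> z)"
    using poly_funE[OF assms] by blast
  show ?thesis
    using has_field_derivative_monomial_expansion[OF p, of z j t]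
    unfolding partial_monomial_expansion[OF p, of j "z(j := t)"] by simp
qed

lemma poly_fun_partial:
  assumes "poly_fun d p"
  shows "poly_fun (d - 1) (partial p j)"
proof -
  obtain coef where p: "\<And>z. p z = (\<Sum>\<alpha>\<in>{\<alpha>. sum \<alpha> UNIV \<le> d}. coef \<alpha> * monomial \<alpha> z)"
    using poly_funE[OF assms] by blast
  \<comment> \<open>exponents with \<open>\<alpha> j = 0\<close> have coefficient 0, so any exponent of small degree may replace them\<close>
  define g where "g \<alpha> = (if \<alpha> j = 0 then (\<lambda>_. 0) else \<alpha>(j := \<alpha> j - 1))" for \<alpha> :: "'a \<Rightarrow> nat"
  have "partial p j z = (\<Sum>\<alpha>\<in>{\<alpha>. sum \<alpha> UNIV \<le> d}. coef \<alpha> * of_nat (\<alpha> j) * monomial (g \<alpha>) z)" for z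
    unfolding partial_monomial_expansion[OF p] by (intro sum.cong refl) (simp add: g_def)
  moreover have "sum (g \<alpha>) UNIV \<le> d - 1" if "sum \<alpha> UNIV \<le> d" for \<alpha>
  proof -
    have "sum \<alpha> UNIV = \<alpha> j + sum \<alpha> (UNIV - {j})" by (rule sum.remove) auto
    moreover have "sum (\<alpha>(j := \<alpha> j - 1)) UNIV = (\<alpha> j - 1) + sum \<alpha> (UNIV - {j})"
      by (subst sum.remove[of _ j]) (auto intro!: sum.cong)
    ultimately show ?thesis using that by (auto simp: g_def)
  qed
  ultimately show ?thesis
    by (intro poly_funI[OF finite_total_degree_le, where g=g and c="\<lambda>\<alpha>. coef \<alpha> * of_nat (\<alpha> j)"]) auto
qed

lemma hom_poly_euler:
  assumes "hom_poly c p"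
  shows "(\<Sum>j\<in>UNIV. z j * partial p j z) = of_nat c * p z"
proof -
  obtain coef where p: "\<And>z. p z = (\<Sum>\<alpha>\<in>{\<alpha>. sum \<alpha> UNIV = c}. coef \<alpha> * monomial \<alpha> z)"
    using hom_polyE[OF assms] by blast
  have summand: "z j * (coef \<alpha> * (of_nat (\<alpha> j) * monomial (\<alpha>(j := \<alpha> j - 1)) z))
      = coef \<alpha> * monomial \<alpha> z * of_nat (\<alpha> j)" for \<alpha> j
  proof (cases "\<alpha> j = 0")
    case False
    then have "z j * monomial (\<alpha>(j := \<alpha> j - 1)) z = monomial \<alpha> z"
      using monomial_upd[of "\<alpha>(j := \<alpha> j - 1)" z j "z j"] monomial_upd[of \<alpha> z j "z j"]
      by (simp add: power_eq_if)
    then show ?thesis by (metis mult.assoc mult.commute)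
  qed simp
  have "(\<Sum>j\<in>UNIV. z j * partial p j z)
      = (\<Sum>j\<in>UNIV. \<Sum>\<alpha>\<in>{\<alpha>. sum \<alpha> UNIV = c}. coef \<alpha> * monomial \<alpha> z * of_nat (\<alpha> j))"
    unfolding partial_monomial_expansion[OF p] sum_distrib_left summand ..
  also have "\<dots> = (\<Sum>\<alpha>\<in>{\<alpha>. sum \<alpha> UNIV = c}. coef \<alpha> * monomial \<alpha> z * of_nat c)"
    by (subst sum.swap) (simp add: sum_distrib_left[symmetric] of_nat_sum[symmetric])
  also have "\<dots> = of_nat c * p z"
    unfolding p by (simp add: sum_distrib_left ac_simps)
  finally show ?thesis .
qed

section \<open>Block maps with bijective fibre maps\<close>

lemma polynomial_map_comp_Inl:
  assumes "polynomial_map H"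
  shows "polynomial_map (\<lambda>y. H y \<circ> Inl)"
  using assms unfolding polynomial_map_def poly_map_def by auto

lemma zero_fibre_blk_R_iff:
  assumes "\<And>z1. bij (blk_R G z1)"
  shows "(\<forall>b. G w (Inr b) = 0) \<longleftrightarrow> w = case_sum (w \<circ> Inl) (inv (blk_R G (w \<circ> Inl)) (\<lambda>_. 0))"
proof -
  have "(\<forall>b. G w (Inr b) = 0) \<longleftrightarrow> blk_R G (w \<circ> Inl) (w \<circ> Inr) = (\<lambda>_. 0)"
    by (simp add: blk_R_def fun_eq_iff o_def surjective_sum)
  also have "\<dots> \<longleftrightarrow> w \<circ> Inr = inv (blk_R G (w \<circ> Inl)) (\<lambda>_. 0)"
    using bij_inv_eq_iff[OF assms] by metis
  also have "\<dots> \<longleftrightarrow> w = case_sum (w \<circ> Inl) (inv (blk_R G (w \<circ> Inl)) (\<lambda>_. 0))"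
    by (auto simp: fun_eq_iff split_sum_all)
  finally show ?thesis .
qed

lemma blk_R_section_Inr:
  assumes "bij (blk_R G z1)"
  shows "G (case_sum z1 (inv (blk_R G z1) (\<lambda>_. 0))) (Inr b) = 0"
proof -
  have "G (case_sum z1 (inv (blk_R G z1) (\<lambda>_. 0))) (Inr b) = blk_R G z1 (inv (blk_R G z1) (\<lambda>_. 0)) b"
    by (simp add: blk_R_def)
  also have "\<dots> = 0"
    using assms by (simp add: bij_is_surj surj_f_inv_f)
  finally show ?thesis .
qed

text \<open>The zero fibre of G is the graph of s, and G maps it onto \<open>C^n' \<times> {0}\<close> as F maps \<open>C^n'\<close>.\<close>
lemma isJ_iff_isJ_blk:
  fixes G :: "('a::finite + 'b::finite \<Rightarrow> complex) \<Rightarrow> ('a + 'b \<Rightarrow> complex)"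
    and F :: "('a \<Rightarrow> complex) \<Rightarrow> ('a \<Rightarrow> complex)"
  defines "s z1 \<equiv> case_sum z1 (inv (blk_R G z1) (\<lambda>_. 0))"
  assumes G: "poly_map d G" and fibres: "\<And>z1. isJ (blk_R G z1)"
    and F: "polynomial_map F" and s: "polynomial_map s"
    and G_s: "\<And>z1 i. G (s z1) (Inl i) = F z1 i"
  shows "isJ F \<longleftrightarrow> isJ_blk d G"
proof -
  define S :: "('a + 'b \<Rightarrow> complex) set" where "S = {y. \<forall>b. y (Inr b) = 0}"
  define emb :: "('a \<Rightarrow> complex) \<Rightarrow> ('a + 'b \<Rightarrow> complex)" where "emb y = case_sum y (\<lambda>_. 0)" for y
  have bij_R: "bij (blk_R G z1)" for z1
    using fibres by (simp add: isJ_def)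
  have G_s_eq: "G (s z1) = emb (F z1)" for z1
    using G_s blk_R_section_Inr[OF bij_R] by (simp add: fun_eq_iff split_sum_all emb_def s_def)
  have fibre_eq: "G w \<in> S \<longleftrightarrow> w = s (w \<circ> Inl)" for w
    unfolding S_def s_def using zero_fibre_blk_R_iff[OF bij_R] by simp
  have s_Inl: "s z1 \<circ> Inl = z1" for z1
    by (simp add: s_def fun_eq_iff)
  have "G -` S = range s"
    using fibre_eq s_Inl by auto
  moreover have "inj s" by (metis injI s_Inl)
  ultimately have "bij_betw G (G -` S) S \<longleftrightarrow> bij_betw (G \<circ> s) UNIV S"
    by (simp add: bij_betw_comp_iff inj_on_imp_bij_betw)
  also have "\<dots> \<longleftrightarrow> bij F"
    unfolding comp_def G_s_eq
    by (rule bij_betw_comp_iff2[symmetric, unfolded comp_def])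
       (auto simp: S_def emb_def bij_betw_def inj_on_def fun_eq_iff split_sum_all image_iff)
  finally have bij_iff: "bij_betw G (G -` S) S \<longleftrightarrow> bij F" .
  have inverse_iff: "(\<exists>H. polynomial_map H \<and> (\<forall>y. G (H y) = emb y)) \<longleftrightarrow> polynomial_map (inv F)"
    if "bij F"
  proof
    assume "\<exists>H. polynomial_map H \<and> (\<forall>y. G (H y) = emb y)"
    then obtain H where H: "polynomial_map H" and G_H: "\<And>y. G (H y) = emb y" by blast
    have "F (H y \<circ> Inl) = y" for y
    proof -
      have "G (H y) \<in> S" by (simp add: G_H S_def emb_def)
      then have "H y = s (H y \<circ> Inl)" by (rule fibre_eq[THEN iffD1])
      then have "emb (F (H y \<circ> Inl)) = emb y"
        by (metis G_H G_s_eq)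
      then show ?thesis by (metis emb_def sum.case(1) ext)
    qed
    then have "inv F = (\<lambda>y. H y \<circ> Inl)"
      using that by (metis bij_inv_eq_iff)
    then show "polynomial_map (inv F)"
      using polynomial_map_comp_Inl[OF H] by simp
  next
    assume "polynomial_map (inv F)"
    moreover have "G ((s \<circ> inv F) y) = emb y" for y
      using that by (simp add: G_s_eq bij_is_surj surj_f_inv_f)
    ultimately show "\<exists>H. polynomial_map H \<and> (\<forall>y. G (H y) = emb y)"
      using polynomial_map_compose[OF s] by blast
  qed
  show ?thesis
    using G fibres F bij_iff inverse_iff
    unfolding isJ_def isJ_blk_def Let_def S_def emb_def by blast
qed

text \<open>The entries \<open>Q_ij\<close> of the header; \<open>Q(z^(1)) = R^{-1}(0; z^(1))\<close>.\<close>
definition euler_coeff :: "nat \<Rightarrow> (nat \<Rightarrow> ('n::finite \<Rightarrow> complex) \<Rightarrow> ('n \<Rightarrow> complex))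
    \<Rightarrow> 'n \<Rightarrow> 'n \<Rightarrow> ('n \<Rightarrow> complex) \<Rightarrow> complex" where
  "euler_coeff d Fc i j z = (\<Sum>c\<in>{1..d+1}. (1 / of_nat c) * partial (\<lambda>x. Fc c x i) j z)"

lemma Ftilde_Inl: "Ftilde d Fc w (Inl i) = (\<Sum>j\<in>UNIV. w (Inr (i, j)) * w (Inl j))"
  by (simp add: Ftilde_def)

lemma Ftilde_Inr: "Ftilde d Fc w (Inr (i, j)) = w (Inr (i, j)) - euler_coeff d Fc i j (w \<circ> Inl)"
  by (simp add: Ftilde_def euler_coeff_def o_def)

lemma Rinv_apply: "Rinv d Fc z1 y2 ij = y2 ij + euler_coeff d Fc (fst ij) (snd ij) z1"
  by (simp add: Rinv_def euler_coeff_def split_def)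

lemma blk_R_Ftilde_apply:
  "blk_R (Ftilde d Fc) z1 z2 ij = z2 ij - euler_coeff d Fc (fst ij) (snd ij) z1"
  by (cases ij) (simp add: blk_R_def Ftilde_Inr o_def)

lemma Rinv_blk_R_Ftilde: "Rinv d Fc z1 (blk_R (Ftilde d Fc) z1 z2) = z2"
  and blk_R_Ftilde_Rinv: "blk_R (Ftilde d Fc) z1 (Rinv d Fc z1 y2) = y2"
  by (simp_all add: fun_eq_iff Rinv_apply blk_R_Ftilde_apply)

lemma bij_blk_R_Ftilde: "bij (blk_R (Ftilde d Fc) z1)"
  by (rule o_bij[of "Rinv d Fc z1"]) (simp_all add: fun_eq_iff Rinv_blk_R_Ftilde blk_R_Ftilde_Rinv)

lemma inv_blk_R_Ftilde: "inv (blk_R (Ftilde d Fc) z1) = Rinv d Fc z1"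
  by (rule inv_equality) (simp_all add: Rinv_blk_R_Ftilde blk_R_Ftilde_Rinv)

lemma isJ_blk_R_Ftilde: "isJ (blk_R (Ftilde d Fc) z1)"
  unfolding isJ_def
proof (intro conjI bij_blk_R_Ftilde)
  show "polynomial_map (blk_R (Ftilde d Fc) z1)"
    unfolding polynomial_map_def poly_map_def blk_R_Ftilde_apply
    by (intro exI[of _ 1] allI poly_fun_diff poly_fun_var poly_fun_const)
  show "polynomial_map (inv (blk_R (Ftilde d Fc) z1))"
    unfolding inv_blk_R_Ftilde polynomial_map_def poly_map_def Rinv_apply
    by (intro exI[of _ 1] allI poly_fun_add poly_fun_var poly_fun_const)
qed

lemma jac_Ftilde_Inr_Inr:
  fixes w :: "'n::finite + 'n \<times> 'n \<Rightarrow> complex"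
  shows "jac (Ftilde d Fc) w $ Inr x $ Inr y = (if y = x then 1 else 0)"
proof -
  obtain i j where y: "y = (i, j)" by (cases y)
  have Inl_part: "w(Inr x := t) \<circ> Inl = w \<circ> Inl" for t
    by (simp add: fun_eq_iff)
  have "((\<lambda>t. Ftilde d Fc (w(Inr x := t)) (Inr y)) has_field_derivative
      (if (Inr y :: 'n + 'n \<times> 'n) = Inr x then 1 else 0) - 0) (at (w (Inr x)))"
    unfolding y Ftilde_Inr Inl_part by (intro DERIV_diff has_field_derivative_fun_upd DERIV_const)
  then have "partial (\<lambda>w. Ftilde d Fc w (Inr y)) (Inr x) w
      = (if (Inr y :: 'n + 'n \<times> 'n) = Inr x then 1 else 0) - 0"
    by (rule partial_eqI)
  then show ?thesis by (simp add: jac_def)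
qed

lemma jac_Ftilde_Inl_Inl:
  fixes w :: "'n::finite + 'n \<times> 'n \<Rightarrow> complex"
  shows "jac (Ftilde d Fc) w $ Inl a $ Inl i = w (Inr (i, a))"
proof -
  have Inr_part: "(w(Inl a := t)) (Inr p) = w (Inr p)" for t p
    by simp
  have "((\<lambda>t. Ftilde d Fc (w(Inl a := t)) (Inl i)) has_field_derivative
      (\<Sum>j\<in>UNIV. w (Inr (i, j)) * (if (Inl j :: 'n + 'n \<times> 'n) = Inl a then 1 else 0))) (at (w (Inl a)))"
    unfolding Ftilde_Inl Inr_part by (intro DERIV_sum DERIV_cmult has_field_derivative_fun_upd)
  then have "partial (\<lambda>w. Ftilde d Fc w (Inl i)) (Inl a) w
      = (\<Sum>j\<in>UNIV. w (Inr (i, j)) * (if (Inl j :: 'n + 'n \<times> 'n) = Inl a then 1 else 0))"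
    by (rule partial_eqI)
  then show ?thesis by (simp add: jac_def mult_if_one_zero)
qed

lemma jac_Ftilde_Inr_Inl:
  fixes w :: "'n::finite + 'n \<times> 'n \<Rightarrow> complex"
  shows "jac (Ftilde d Fc) w $ Inr y $ Inl i = (if fst y = i then w (Inl (snd y)) else 0)"
proof -
  obtain p q where y: "y = (p, q)" by (cases y)
  have Inl_part: "(w(Inr y := t)) (Inl j) = w (Inl j)" for t j
    by simp
  have "((\<lambda>t. Ftilde d Fc (w(Inr y := t)) (Inl i)) has_field_derivative
      (\<Sum>j\<in>UNIV. (if (Inr (i, j) :: 'n + 'n \<times> 'n) = Inr y then 1 else 0) * w (Inl j))) (at (w (Inr y)))"
    unfolding Ftilde_Inl Inl_part by (intro DERIV_sum DERIV_cmult_right has_field_derivative_fun_upd)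
  then have "partial (\<lambda>w. Ftilde d Fc w (Inl i)) (Inr y) w
      = (\<Sum>j\<in>UNIV. (if (Inr (i, j) :: 'n + 'n \<times> 'n) = Inr y then 1 else 0) * w (Inl j))"
    by (rule partial_eqI)
  then show ?thesis by (cases "p = i") (simp_all add: jac_def y mult_if_one_zero)
qed

locale homogeneous_decomposition =
  fixes F :: "('n::finite \<Rightarrow> complex) \<Rightarrow> ('n \<Rightarrow> complex)"
    and Fc :: "nat \<Rightarrow> ('n \<Rightarrow> complex) \<Rightarrow> ('n \<Rightarrow> complex)"
    and d :: nat
  assumes hom_poly_component: "\<And>c i. c \<in> {1..d+1} \<Longrightarrow> hom_poly c (\<lambda>z. Fc c z i)"
    and F_eq_sum: "\<And>z i. F z i = (\<Sum>c\<in>{1..d+1}. Fc c z i)"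
begin

abbreviation lift :: "('n \<Rightarrow> complex) \<Rightarrow> ('n + 'n \<times> 'n \<Rightarrow> complex)" where
  "lift z1 \<equiv> case_sum z1 (Rinv d Fc z1 (\<lambda>_. 0))"

lemma poly_fun_euler_coeff: "poly_fun d (euler_coeff d Fc i j)"
  unfolding euler_coeff_def
proof (intro poly_fun_sum poly_fun_cmult)
  fix c assume c: "c \<in> {1..d+1}"
  then have "poly_fun (c - 1) (partial (\<lambda>x. Fc c x i) j)"
    by (intro poly_fun_partial hom_poly_imp_poly_fun hom_poly_component)
  then show "poly_fun d (partial (\<lambda>x. Fc c x i) j)"
    by (rule poly_fun_mono[rotated]) (use c in auto)
qed simp

text \<open>By Euler's identity \<open>\<Sum>j z_j \<partial>_j F_c = c F_c\<close> for each homogeneous component.\<close>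
lemma sum_mult_euler_coeff: "(\<Sum>j\<in>UNIV. z j * euler_coeff d Fc i j z) = F z i"
proof -
  have "(\<Sum>j\<in>UNIV. z j * euler_coeff d Fc i j z)
      = (\<Sum>c\<in>{1..d+1}. (1 / of_nat c) * (\<Sum>j\<in>UNIV. z j * partial (\<lambda>x. Fc c x i) j z))"
    unfolding euler_coeff_def sum_distrib_left by (subst sum.swap) (simp add: ac_simps)
  also have "\<dots> = (\<Sum>c\<in>{1..d+1}. Fc c z i)"
  proof (rule sum.cong[OF refl])
    fix c assume c: "c \<in> {1..d+1}"
    then have "(\<Sum>j\<in>UNIV. z j * partial (\<lambda>x. Fc c x i) j z) = of_nat c * Fc c z i"
      by (intro hom_poly_euler hom_poly_component)
    then show "(1 / of_nat c) * (\<Sum>j\<in>UNIV. z j * partial (\<lambda>x. Fc c x i) j z) = Fc c z i"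
      using c by simp
  qed
  finally show ?thesis by (simp add: F_eq_sum)
qed

lemma poly_map_Ftilde:
  assumes "2 \<le> d"
  shows "poly_map d (Ftilde d Fc)"
  unfolding poly_map_def
proof
  fix k :: "'n + 'n \<times> 'n"
  have var: "poly_fun d (\<lambda>w::'n + 'n \<times> 'n \<Rightarrow> complex. w l)" for l
    using assms by (intro poly_fun_mono[OF _ poly_fun_var]) simp
  show "poly_fun d (\<lambda>w. Ftilde d Fc w k)"
  proof (cases k)
    case (Inl i)
    have "poly_fun (1 + 1) (\<lambda>w::'n + 'n \<times> 'n \<Rightarrow> complex. w (Inr (i, j)) * w (Inl j))" for j
      by (intro poly_fun_mult poly_fun_var)
    then have "poly_fun d (\<lambda>w::'n + 'n \<times> 'n \<Rightarrow> complex. w (Inr (i, j)) * w (Inl j))" for j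
      by (rule poly_fun_mono[rotated]) (use assms in simp)
    then show ?thesis
      unfolding Inl Ftilde_Inl by (intro poly_fun_sum) simp_all
  next
    case (Inr ij)
    have "poly_fun (d * 1) (\<lambda>w::'n + 'n \<times> 'n \<Rightarrow> complex. euler_coeff d Fc i j (\<lambda>l. w (Inl l)))" for i j
      by (intro poly_fun_compose poly_fun_euler_coeff poly_fun_var)
    then show ?thesis
      unfolding Inr by (cases ij) (simp add: Ftilde_Inr o_def poly_fun_diff var)
  qed
qed

lemma poly_map_lift:
  assumes "1 \<le> d"
  shows "poly_map d lift"
  unfolding poly_map_def
proof
  fix k :: "'n + 'n \<times> 'n"
  show "poly_fun d (\<lambda>z1. lift z1 k)"
  proof (cases k)
    case (Inl i)
    then show ?thesis using poly_fun_mono[OF assms poly_fun_var] by simp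
  next
    case (Inr ij)
    then show ?thesis by (simp add: Rinv_apply poly_fun_euler_coeff)
  qed
qed

lemma Ftilde_lift: "Ftilde d Fc (lift z1) = case_sum (F z1) (\<lambda>_. 0)"
proof
  fix k show "Ftilde d Fc (lift z1) k = case_sum (F z1) (\<lambda>_. 0) k"
  proof (cases k)
    case (Inl i)
    then show ?thesis by (simp add: Ftilde_Inl Rinv_apply mult.commute sum_mult_euler_coeff)
  next
    case (Inr ij)
    then show ?thesis by (cases ij) (simp add: Ftilde_Inr Rinv_apply o_def)
  qed
qed

lemma jac_Ftilde_Inl_Inr:
  "jac (Ftilde d Fc) w $ Inl a $ Inr y = - partial (euler_coeff d Fc (fst y) (snd y)) a (w \<circ> Inl)"
proof -
  obtain i j where y: "y = (i, j)" by (cases y)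
  have Inl_part: "w(Inl a := t) \<circ> Inl = (w \<circ> Inl)(a := t)"
    and Inr_part: "(w(Inl a := t)) (Inr (i, j)) = w (Inr (i, j))" for t
    by (simp_all add: fun_eq_iff)
  have "((\<lambda>t. Ftilde d Fc (w(Inl a := t)) (Inr y)) has_field_derivative
      0 - partial (euler_coeff d Fc i j) a ((w \<circ> Inl)(a := w (Inl a)))) (at (w (Inl a)))"
    unfolding y Ftilde_Inr Inl_part Inr_part
    by (intro DERIV_diff DERIV_const has_field_derivative_partial[OF poly_fun_euler_coeff])
  then have "partial (\<lambda>w. Ftilde d Fc w (Inr y)) (Inl a) w
      = 0 - partial (euler_coeff d Fc i j) a ((w \<circ> Inl)(a := w (Inl a)))"
    by (rule partial_eqI)
  moreover have "(w \<circ> Inl)(a := w (Inl a)) = w \<circ> Inl"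
    by (simp add: fun_eq_iff)
  ultimately show ?thesis by (simp add: jac_def y)
qed

text \<open>Differentiating \<open>F_i(z) = \<Sum>q z_q Q_iq(z)\<close> with respect to \<open>z_a\<close>.\<close>
lemma jac_F:
  "jac F z $ a $ i = euler_coeff d Fc i a z + (\<Sum>q\<in>UNIV. z q * partial (euler_coeff d Fc i q) a z)"
proof -
  have "((\<lambda>t. F (z(a := t)) i) has_field_derivative
      (\<Sum>q\<in>UNIV. (if q = a then 1 else 0) * euler_coeff d Fc i q (z(a := z a))
          + partial (euler_coeff d Fc i q) a (z(a := z a)) * (z(a := z a)) q)) (at (z a))"
    unfolding sum_mult_euler_coeff[symmetric]
    by (intro DERIV_sum DERIV_mult has_field_derivative_fun_upd
        has_field_derivative_partial[OF poly_fun_euler_coeff])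
  then have "partial (\<lambda>w. F w i) a z = (\<Sum>q\<in>UNIV. (if q = a then 1 else 0) * euler_coeff d Fc i q z
      + partial (euler_coeff d Fc i q) a z * z q)"
    by (intro partial_eqI[where f="\<lambda>w. F w i"]) simp
  then show ?thesis by (simp add: jac_def sum.distrib mult_if_one_zero mult.commute)
qed

lemma jac_det_Ftilde_lift: "jac_det (Ftilde d Fc) (lift z1) = jac_det F z1"
proof -
  let ?M = "jac (Ftilde d Fc) (lift z1)"
  have "jac_det (Ftilde d Fc) (lift z1)
      = det (\<chi> a i. ?M $ Inl a $ Inl i - (\<Sum>y\<in>UNIV. ?M $ Inl a $ Inr y * ?M $ Inr y $ Inl i))"
    unfolding jac_det_def by (rule det_schur_complement) (rule jac_Ftilde_Inr_Inr)
  also have "(\<chi> a i. ?M $ Inl a $ Inl i - (\<Sum>y\<in>UNIV. ?M $ Inl a $ Inr y * ?M $ Inr y $ Inl i)) = jac F z1"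
  proof -
    have "(\<Sum>y\<in>UNIV. ?M $ Inl a $ Inr y * ?M $ Inr y $ Inl i)
        = - (\<Sum>q\<in>UNIV. z1 q * partial (euler_coeff d Fc i q) a z1)" for a i
    proof -
      have "(\<Sum>y\<in>UNIV. ?M $ Inl a $ Inr y * ?M $ Inr y $ Inl i)
          = - (\<Sum>y\<in>UNIV. partial (euler_coeff d Fc (fst y) (snd y)) a z1
              * (if fst y = i then z1 (snd y) else 0))"
        by (simp add: jac_Ftilde_Inl_Inr jac_Ftilde_Inr_Inl o_def sum_negf cong: if_cong)
      also have "\<dots> = - (\<Sum>q\<in>UNIV. partial (euler_coeff d Fc i q) a z1 * z1 q)"
        by (subst sum_prod_delta_fst) simp
      finally show ?thesis by (simp add: mult.commute)
    qed
    then show ?thesis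
      by (simp add: vec_eq_iff jac_Ftilde_Inl_Inl Rinv_apply jac_F)
  qed
  finally show ?thesis by (simp add: jac_det_def)
qed

end

theorem mainTheorem4:
  fixes F :: "('n::finite \<Rightarrow> complex) \<Rightarrow> ('n \<Rightarrow> complex)"
    and Fc :: "nat \<Rightarrow> ('n \<Rightarrow> complex) \<Rightarrow> ('n \<Rightarrow> complex)"
    and d :: nat
  assumes "d \<ge> 2"
    and "poly_map (d + 1) F"
    and "F (\<lambda>_. 0) = (\<lambda>_. 0)"
    and "\<forall>c\<in>{1..d+1}. \<forall>i. hom_poly c (\<lambda>z. Fc c z i)"
    and "\<forall>z i. F z i = (\<Sum>c\<in>{1..d+1}. Fc c z i)"
  shows "poly_map d (Ftilde d Fc)
    \<and> (\<forall>z1. (\<exists>v. \<forall>z2 ij. blk_R (Ftilde d Fc) z1 z2 ij = z2 ij + v ij)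
           \<and> (\<forall>y2. blk_R (Ftilde d Fc) z1 (Rinv d Fc z1 y2) = y2)
           \<and> (\<forall>z2. Rinv d Fc z1 (blk_R (Ftilde d Fc) z1 z2) = z2))
    \<and> (\<forall>z1 i. Ftilde d Fc (case_sum z1 (Rinv d Fc z1 (\<lambda>_. 0))) (Inl i) = F z1 i)
    \<and> (isJlin F \<longleftrightarrow> isJlin_blk d (Ftilde d Fc))
    \<and> (isJ F \<longleftrightarrow> isJ_blk d (Ftilde d Fc))"
proof -
  interpret homogeneous_decomposition F Fc d
    using assms(4,5) by unfold_locales auto
  have G: "poly_map d (Ftilde d Fc)"
    using assms(1) by (rule poly_map_Ftilde)
  have F: "polynomial_map F"
    using assms(2) unfolding polynomial_map_def by blast
  have lift: "polynomial_map lift"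
    using poly_map_lift assms(1) unfolding polynomial_map_def by auto
  have G_lift: "Ftilde d Fc (lift z1) (Inl i) = F z1 i" for z1 i
    by (simp add: Ftilde_lift)
  have translation: "\<exists>v. \<forall>z2 ij. blk_R (Ftilde d Fc) z1 z2 ij = z2 ij + v ij" for z1
    by (auto simp: blk_R_Ftilde_apply intro: exI[of _ "\<lambda>ij. - euler_coeff d Fc (fst ij) (snd ij) z1"])
  have "isJlin F \<longleftrightarrow> isJlin_blk d (Ftilde d Fc)"
    unfolding isJlin_def isJlin_blk_def inv_blk_R_Ftilde jac_det_Ftilde_lift
    using G F isJ_blk_R_Ftilde by blast
  moreover have "isJ F \<longleftrightarrow> isJ_blk d (Ftilde d Fc)"
    using isJ_iff_isJ_blk[OF G isJ_blk_R_Ftilde F] lift G_lift by (simp add: inv_blk_R_Ftilde)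
  ultimately show ?thesis
    using G translation G_lift blk_R_Ftilde_Rinv Rinv_blk_R_Ftilde by blast
qed

end
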